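(* Let $\lambda\in P$ with $\sharp^{(k,r)}(\lambda)\le1$. Then there is no $\mu\in P$, $\mu\ne\lambda$, with $t^{\rho(\mu)_i}q^{\mu_i}=t^{\rho(\lambda)_i}q^{\lambda_i}$ for all $i$ at the specialization $(\ast)$.
   Context: Let $P=\mathbb Z^n$. For $\lambda\in P$, $\rho(\lambda)$ is the unique permutation of $(\frac{n-1}2,\dots,-\frac{n-1}2)$ with $\rho(\lambda)_i>\rho(\lambda)_j$ iff $\lambda_i>\lambda_j$ or ($\lambda_i=\lambda_j$, $i<j$). Fix $1\le k\le n-1$, $r\ge2$, $g=\gcd(k+1,r-1)$, $\tau=e^{2\pi\sqrt{-1}/(r-1)}$, specialization $(\ast)$: $t=u^{(r-1)/g}$, $q=\tau u^{-(k+1)/g}$ (so $t^{k+1}q^{r-1}=1$). $u_\lambda(f)=f(t^{-\rho(\lambda)_1}q^{-\lambda_1},\dots,t^{-\rho(\lambda)_n}q^{-\lambda_n})$. A wheel in $\lambda$ is a tuple $(i_1,\dots,i_{k+1})$ of distinct indices such that, at $(\ast)$, $u_\lambda(x_{i_{a+1}})=u_\lambda(x_{i_a})tq^{s_a}$ ($1\le a\le k$) for some $s_a\in\mathbb Z_{\ge0}$ with $\sum s_a\le r-2$ and $i_a<i_{a+1}$ whenever $s_a=0$. Wheels that are cyclic rotations of each other are identified; $\sharp^{(k,r)}(\lambda)$ is the number of classes of wheels in $\lambda$. *)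

theory Defs
  imports Complex_Main "HOL-Library.Multiset"
begin

text \<open>Weights lambda in P = Z^n are int lists of length n; indices are 0-based
  (0..n-1), which preserves their order.\<close>

definition rho_vals :: "nat \<Rightarrow> real list" where
  "rho_vals n = map (\<lambda>j. (real n - 1) / 2 - real j) [0..<n]"

definition rho :: "int list \<Rightarrow> real list" where
  "rho lam = (THE r. length r = length lam \<and> mset r = mset (rho_vals (length lam)) \<and>
     (\<forall>i<length lam. \<forall>j<length lam.
        (r ! i > r ! j) \<longleftrightarrow> (lam ! i > lam ! j \<or> (lam ! i = lam ! j \<and> i < j))))"

definition gg :: "nat \<Rightarrow> nat \<Rightarrow> nat" where
  "gg k r = gcd (k + 1) (r - 1)"

definition tau :: "nat \<Rightarrow> complex" where
  "tau r = cis (2 * pi / real (r - 1))"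

text \<open>Specialization (*): t = u^((r-1)/g), q = tau * u^(-(k+1)/g), with u a formal
  (generic) variable; we model u as ranging over the positive reals.\<close>
definition spec_t :: "nat \<Rightarrow> nat \<Rightarrow> real \<Rightarrow> real" where
  "spec_t k r u = u powr (real (r - 1) / real (gg k r))"

definition spec_q :: "nat \<Rightarrow> nat \<Rightarrow> real \<Rightarrow> complex" where
  "spec_q k r u = tau r * complex_of_real (u powr (- real (k + 1) / real (gg k r)))"

definition spec_mono :: "nat \<Rightarrow> nat \<Rightarrow> real \<Rightarrow> real \<Rightarrow> int \<Rightarrow> complex" where
  "spec_mono k r u a b = complex_of_real (spec_t k r u powr a) * (spec_q k r u) powi b"

definition ulam :: "nat \<Rightarrow> nat \<Rightarrow> int list \<Rightarrow> nat \<Rightarrow> real \<Rightarrow> complex" where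
  "ulam k r lam i u = spec_mono k r u (- (rho lam ! i)) (- (lam ! i))"

text \<open>Equality "at (*)" means equality as functions of the formal variable u,
  i.e. for all u > 0.\<close>
definition is_wheel :: "nat \<Rightarrow> nat \<Rightarrow> int list \<Rightarrow> nat list \<Rightarrow> bool" where
  "is_wheel k r lam w \<longleftrightarrow>
     length w = k + 1 \<and> distinct w \<and> (\<forall>i\<in>set w. i < length lam) \<and>
     (\<exists>s :: nat list. length s = k \<and> sum_list s \<le> r - 2 \<and>
        (\<forall>a<k. (\<forall>u>0. ulam k r lam (w ! (a + 1)) u
                      = ulam k r lam (w ! a) u * spec_mono k r u 1 (int (s ! a)))
              \<and> (s ! a = 0 \<longrightarrow> w ! a < w ! (a + 1))))"

definition wheels :: "nat \<Rightarrow> nat \<Rightarrow> int list \<Rightarrow> nat list set" where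
  "wheels k r lam = {w. is_wheel k r lam w}"

definition wheel_rot :: "nat \<Rightarrow> nat \<Rightarrow> int list \<Rightarrow> (nat list \<times> nat list) set" where
  "wheel_rot k r lam = {(w, w'). w \<in> wheels k r lam \<and> w' \<in> wheels k r lam \<and> (\<exists>j. w' = rotate j w)}"

definition sharp :: "nat \<Rightarrow> nat \<Rightarrow> int list \<Rightarrow> nat" where
  "sharp k r lam = card (wheels k r lam // wheel_rot k r lam)"

end

theory Submission
  imports Defs "HOL-Library.Real_Mod"
begin

text \<open>
  Comparing the real exponents of u and the roots of unity at the specialization, a weight
  mu \<noteq> lambda that specializes like lambda has the same weights
  w(i) = (r - 1) rank(i) + (k + 1) lambda_i as lambda, and its rank function agrees with that
  of lambda modulo k + 1 but is a different permutation.  Both rank functions enumerate the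
  indices so that consecutive indices x, y satisfy w(y) <= w(x) + r - 1, with x < y in case of
  equality.  Where the two enumerations first disagree they cross, and the stretches of both
  enumerations after the crossing, sorted by residue mod k + 1, carry two closed walks through
  all residues: one through the points of largest weight, one through those of smallest
  weight.  Along such a walk the steps (w(x) + r - 1 - w(y)) / (k + 1) are natural numbers
  summing to r - 1, so leaving out one positive step gives a wheel.  The two walks give two
  wheels with different supports, hence two classes of wheels.
\<close>

lemma gg_pos: "0 < gg k r"
  unfolding gg_def by simp

lemma spec_mono_conv:
  assumes "0 < u"
  shows "spec_mono k r u a b =
    complex_of_real (u powr ((real (r - 1) * a - real (k + 1) * of_int b) / real (gg k r)))
    * tau r powi b"
proof -
  have "spec_t k r u powr a = u powr (real (r - 1) / real (gg k r) * a)"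
    unfolding spec_t_def using assms by (simp add: powr_powr)
  moreover have "(u powr (- real (k + 1) / real (gg k r))) powi b
      = u powr (- real (k + 1) / real (gg k r) * of_int b)"
    using assms by (simp add: powr_real_of_int' powr_powr flip: powr_real_of_int')
  ultimately have "spec_mono k r u a b = complex_of_real (u powr (real (r - 1) / real (gg k r) * a)
      * u powr (- real (k + 1) / real (gg k r) * of_int b)) * tau r powi b"
    unfolding spec_mono_def spec_q_def by (simp add: power_int_mult_distrib mult_ac)
  also have "u powr (real (r - 1) / real (gg k r) * a) * u powr (- real (k + 1) / real (gg k r) * of_int b)
      = u powr ((real (r - 1) * a - real (k + 1) * of_int b) / real (gg k r))"
    using gg_pos [of k r] unfolding powr_add [symmetric]
    by (intro arg_cong [where f = "\<lambda>e. u powr e"]) (simp add: field_simps)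
  finally show ?thesis .
qed

lemma tau_nonzero: "tau r \<noteq> 0"
  unfolding tau_def by simp

lemma norm_tau_powi: "norm (tau r powi m) = 1"
  unfolding tau_def by (simp add: cis_power_int)

lemma tau_powi_eq_1_iff:
  assumes "2 \<le> r"
  shows "tau r powi m = 1 \<longleftrightarrow> int (r - 1) dvd m"
proof -
  have r: "real (r - 1) \<noteq> 0" using assms by simp
  have "of_int m * (2 * pi / real (r - 1)) = of_int c * (2 * pi) \<longleftrightarrow> of_int m / real (r - 1) = of_int c"
    for c :: int
  proof -
    have "of_int m * (2 * pi / real (r - 1)) = of_int m / real (r - 1) * (2 * pi)" by simp
    then show ?thesis by (simp only: mult_cancel_right) simp
  qed
  then have "tau r powi m = 1 \<longleftrightarrow> (\<exists>c::int. real_of_int m = real_of_int (c * int (r - 1)))"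
    unfolding tau_def cis_power_int cis_eq_1_iff using r by (simp add: divide_eq_eq)
  also have "\<dots> \<longleftrightarrow> int (r - 1) dvd m"
    unfolding of_int_eq_iff by (auto simp: dvd_def mult.commute)
  finally show ?thesis .
qed

lemma tau_powi_eq_iff:
  assumes "2 \<le> r"
  shows "tau r powi b = tau r powi b' \<longleftrightarrow> int (r - 1) dvd (b - b')"
proof -
  have "tau r powi b = tau r powi b' \<longleftrightarrow> tau r powi (b - b') = 1"
    using tau_nonzero [of r] by (simp add: power_int_diff)
  with tau_powi_eq_1_iff [OF assms] show ?thesis by simp
qed

lemma spec_mono_eq_iff:
  assumes "2 \<le> r"
  shows "(\<forall>u>0. spec_mono k r u a b = spec_mono k r u a' b') \<longleftrightarrow>
    real (r - 1) * a - real (k + 1) * of_int b = real (r - 1) * a' - real (k + 1) * of_int b' \<and>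
    int (r - 1) dvd (b - b')"
    (is "_ \<longleftrightarrow> ?e = ?e' \<and> _")
proof -
  have g: "real (gg k r) \<noteq> 0" using gg_pos [of k r] by simp
  have "?e = ?e' \<and> tau r powi b = tau r powi b'" if eq: "spec_mono k r 2 a b = spec_mono k r 2 a' b'"
  proof -
    have "norm (spec_mono k r 2 a b) = norm (spec_mono k r 2 a' b')" using eq by simp
    then have "2 powr (?e / gg k r) = (2::real) powr (?e' / gg k r)"
      by (simp add: spec_mono_conv norm_mult norm_tau_powi)
    then have "?e = ?e'" using g by (simp add: powr_inj)
    with eq show ?thesis by (simp add: spec_mono_conv)
  qed
  then show ?thesis
    using tau_powi_eq_iff [OF assms] by (auto simp: spec_mono_conv)
qed

lemma spec_mono_mult:
  assumes "0 < u"
  shows "spec_mono k r u a b * spec_mono k r u a' b' = spec_mono k r u (a + a') (b + b')"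
proof -
  have "spec_q k r u \<noteq> 0" using assms tau_nonzero [of r] by (simp add: spec_q_def)
  then show ?thesis
    by (simp add: spec_mono_def powr_add power_int_add mult_ac)
qed

definition precedes :: "int list \<Rightarrow> nat \<Rightarrow> nat \<Rightarrow> bool" where
  "precedes l z x \<longleftrightarrow> l ! x < l ! z \<or> (l ! z = l ! x \<and> z < x)"

definition rank :: "int list \<Rightarrow> nat \<Rightarrow> nat" where
  "rank l x = card {z. z < length l \<and> precedes l z x}"

lemma precedes_trans: "precedes l a b \<Longrightarrow> precedes l b c \<Longrightarrow> precedes l a c"
  unfolding precedes_def by auto

lemma precedes_irrefl: "\<not> precedes l a a"
  unfolding precedes_def by auto

lemma precedes_total: "a \<noteq> b \<Longrightarrow> precedes l a b \<or> precedes l b a"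
  unfolding precedes_def by auto

lemma rank_less_length: "x < length l \<Longrightarrow> rank l x < length l"
proof -
  assume x: "x < length l"
  have "{z. z < length l \<and> precedes l z x} \<subseteq> {..<length l} - {x}"
    using precedes_irrefl by auto
  then have "rank l x \<le> card ({..<length l} - {x})"
    unfolding rank_def by (intro card_mono) auto
  with x show ?thesis by simp
qed

lemma rank_strict_mono:
  assumes "z < length l" "precedes l z x"
  shows "rank l z < rank l x"
proof -
  have "{w. w < length l \<and> precedes l w z} \<subset> {w. w < length l \<and> precedes l w x}"
    using assms precedes_trans precedes_irrefl by blast
  then show ?thesis unfolding rank_def by (intro psubset_card_mono) auto
qed

lemma rank_less_iff:
  "z < length l \<Longrightarrow> x < length l \<Longrightarrow> rank l z < rank l x \<longleftrightarrow> precedes l z x"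
  using rank_strict_mono precedes_total by (metis less_asym less_irrefl)

lemma bij_betw_rank: "bij_betw (rank l) {..<length l} {..<length l}"
proof -
  have "inj_on (rank l) {..<length l}"
    using rank_strict_mono precedes_total by (metis inj_onI lessThan_iff less_irrefl)
  moreover have "rank l ` {..<length l} \<subseteq> {..<length l}"
    using rank_less_length by auto
  ultimately show ?thesis
    by (simp add: bij_betw_def card_image card_subset_eq)
qed

lemma rho_vals_nth_by_count:
  assumes xs: "mset xs = mset (rho_vals n)" and i: "i < n"
  shows "xs ! i = (real n - 1) / 2 - real (card {z. z < n \<and> xs ! i < xs ! z})"
proof -
  define g where "g j = (real n - 1) / 2 - real j" for j :: nat
  have g: "inj g" unfolding g_def inj_on_def by auto
  have rho_vals: "rho_vals n = map g [0..<n]" unfolding rho_vals_def g_def ..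
  have n: "length xs = n" using mset_eq_length [OF xs] by (simp add: rho_vals)
  have set_xs: "set xs = g ` {..<n}"
    using arg_cong [OF xs, of set_mset] by (simp add: rho_vals atLeast0LessThan)
  have "distinct (rho_vals n)"
    using inj_on_subset [OF g subset_UNIV] by (simp add: rho_vals distinct_map)
  then have "distinct xs" using mset_eq_imp_distinct_iff [OF xs] by simp
  obtain t where t: "t < n" "xs ! i = g t" using set_xs i n by (metis imageE lessThan_iff nth_mem)
  have "card {z. z < n \<and> xs ! i < xs ! z} = card ((!) xs ` {z. z < n \<and> xs ! i < xs ! z})"
    using \<open>distinct xs\<close> n by (intro card_image [symmetric]) (auto simp: inj_on_def nth_eq_iff_index_eq)
  also have "(!) xs ` {z. z < n \<and> xs ! i < xs ! z} = {v \<in> set xs. g t < v}"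
    using n t by (auto simp: in_set_conv_nth)
  also have "{v \<in> set xs. g t < v} = g ` {..<t}"
    using set_xs t unfolding g_def by auto
  also have "card (g ` {..<t}) = t" using inj_on_subset [OF g subset_UNIV] by (simp add: card_image)
  finally show ?thesis using t by (simp add: g_def)
qed

lemma rho_spec_nth:
  assumes "mset xs = mset (rho_vals (length l))"
    and "\<forall>i<length l. \<forall>j<length l. xs ! j < xs ! i \<longleftrightarrow> l ! j < l ! i \<or> (l ! i = l ! j \<and> i < j)"
    and "i < length l"
  shows "xs ! i = (real (length l) - 1) / 2 - real (rank l i)"
proof -
  have "{z. z < length l \<and> xs ! i < xs ! z} = {z. z < length l \<and> precedes l z i}"
    using assms(2,3) unfolding precedes_def by auto
  then show ?thesis
    using rho_vals_nth_by_count [OF assms(1,3)] unfolding rank_def by simp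
qed

lemma rho_nth:
  assumes "i < length l"
  shows "rho l ! i = (real (length l) - 1) / 2 - real (rank l i)"
proof -
  let ?n = "length l"
  define R where "R = map (\<lambda>i. (real ?n - 1) / 2 - real (rank l i)) [0..<?n]"
  have "distinct (map (rank l) [0..<?n])" "set (map (rank l) [0..<?n]) = set [0..<?n]"
    using bij_betw_rank [of l] by (simp_all add: bij_betw_def distinct_map atLeast0LessThan)
  then have rank_perm: "mset (map (rank l) [0..<?n]) = mset [0..<?n]"
    using set_eq_iff_mset_eq_distinct distinct_upt by blast
  define h where "h j = (real ?n - 1) / 2 - real j" for j :: nat
  have "mset R = mset (map h (map (rank l) [0..<?n]))" by (simp add: R_def h_def comp_def)
  also have "\<dots> = image_mset h (mset [0..<?n])" by (simp only: mset_map [of h] rank_perm)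
  also have "\<dots> = mset (rho_vals ?n)" by (simp add: rho_vals_def h_def [abs_def])
  finally have "mset R = mset (rho_vals ?n)" .
  moreover have "\<forall>i<?n. \<forall>j<?n. R ! j < R ! i \<longleftrightarrow> l ! j < l ! i \<or> (l ! i = l ! j \<and> i < j)"
    unfolding R_def using rank_less_iff unfolding precedes_def by auto
  moreover have "xs = R" if "length xs = ?n" "mset xs = mset (rho_vals ?n)"
    "\<forall>i<?n. \<forall>j<?n. xs ! j < xs ! i \<longleftrightarrow> l ! j < l ! i \<or> (l ! i = l ! j \<and> i < j)" for xs
    using that rho_spec_nth [OF that(2,3)] by (intro nth_equalityI) (auto simp: R_def)
  ultimately have "rho l = R"
    unfolding rho_def by (intro the_equality) (auto simp: R_def)
  with assms show ?thesis by (simp add: R_def)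
qed

lemma Suc_mod_eq_Suc_mod_iff: "Suc a mod K = Suc b mod K \<longleftrightarrow> a mod K = b mod K"
  by (simp add: nat_mod_eq_iff)

lemma mod_add_left_cancel_less:
  fixes m a b K :: nat
  assumes "a < K" "b < K" "(m + a) mod K = (m + b) mod K"
  shows "a = b"
proof -
  have "a mod K = b mod K" using assms(3) by (simp add: nat_mod_eq_iff)
  with assms(1,2) show ?thesis by simp
qed

lemma sum_periodic_telescope:
  fixes f s :: "nat \<Rightarrow> int"
  assumes "0 < K" and periodic: "\<And>t. f (t + K) = f t"
    and steps: "\<And>t. int K * s t = f t + R - f (Suc t)"
  shows "(\<Sum>a<K. s (b + a)) = R"
proof -
  have "int K * (\<Sum>a<K. s (b + a)) = (\<Sum>a<K. (f (b + a) - f (b + Suc a)) + R)"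
    by (simp add: sum_distrib_left steps algebra_simps)
  also have "\<dots> = (\<Sum>a<K. f (b + a) - f (b + Suc a)) + int K * R"
    by (simp add: sum.distrib)
  also have "(\<Sum>a<K. f (b + a) - f (b + Suc a)) = 0"
    using sum_lessThan_telescope' [of "\<lambda>a. f (b + a)" K] periodic [of b] by (simp add: add.commute)
  finally show ?thesis using assms(1) by simp
qed

lemma lex_encode_less_iff:
  fixes a b N :: int and x y :: nat
  assumes "int x < N" "int y < N"
  shows "N * a - int y < N * b - int x \<longleftrightarrow> a < b \<or> (a = b \<and> x < y)"
proof (cases a b rule: linorder_cases)
  case less
  then have "N * a \<le> N * (b - 1)" using assms by (intro mult_left_mono) auto
  with less assms show ?thesis by (simp add: algebra_simps)
next
  case greater
  then have "N * (b + 1) \<le> N * a" using assms by (intro mult_left_mono) auto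
  with greater assms show ?thesis by (simp add: algebra_simps)
qed simp

text \<open>In the application the points are the indices of lambda, the admissible enumerations
  are the rank functions of lambda and mu, and cls is the residue of the rank of lambda.\<close>

locale residue_enumerations =
  fixes n K :: nat and key :: "nat \<Rightarrow> int" and cls :: "nat \<Rightarrow> nat" and B :: int
  assumes K_pos: "0 < K" and inj_key: "inj_on key {..<n}"
begin

definition follows :: "nat \<Rightarrow> nat \<Rightarrow> bool" where
  "follows x y \<longleftrightarrow> key y < key x + B"

definition admissible :: "(nat \<Rightarrow> nat) \<Rightarrow> bool" where
  "admissible s \<longleftrightarrow> bij_betw s {..<n} {..<n} \<and> (\<forall>x<n. s x mod K = cls x) \<and>
     (\<forall>x<n. \<forall>y<n. s y = Suc (s x) \<longrightarrow> follows x y)"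

definition cycle :: "nat \<Rightarrow> (nat \<Rightarrow> nat) \<Rightarrow> bool" where
  "cycle c y \<longleftrightarrow> (\<forall>t<K. y t < n \<and> cls (y t) = (c + t) mod K \<and> follows (y t) (y (Suc t mod K)))"

lemma follows_mono: "follows x y \<Longrightarrow> key x \<le> key x' \<Longrightarrow> key y' \<le> key y \<Longrightarrow> follows x' y'"
  unfolding follows_def by linarith

lemma admissible_less: "admissible s \<Longrightarrow> x < n \<Longrightarrow> s x < n"
  unfolding admissible_def bij_betw_def by auto

lemma admissible_inj: "admissible s \<Longrightarrow> x < n \<Longrightarrow> y < n \<Longrightarrow> s x = s y \<Longrightarrow> x = y"
  unfolding admissible_def bij_betw_def inj_on_def by auto

lemma admissible_at:
  assumes "admissible s" "p < n"
  obtains x where "x < n" "s x = p"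
  using assms unfolding admissible_def bij_betw_def by (metis imageE lessThan_iff)

lemma admissible_cls: "admissible s \<Longrightarrow> x < n \<Longrightarrow> s x mod K = cls x"
  unfolding admissible_def by auto

lemma admissible_follows:
  "admissible s \<Longrightarrow> x < n \<Longrightarrow> y < n \<Longrightarrow> s y = Suc (s x) \<Longrightarrow> follows x y"
  unfolding admissible_def by auto

lemma cycle_periodic:
  assumes "cycle c y"
  shows "y (t mod K) < n" "cls (y (t mod K)) = (c + t) mod K" "follows (y (t mod K)) (y (Suc t mod K))"
proof -
  have "t mod K < K" using K_pos by simp
  with assms show "y (t mod K) < n" "cls (y (t mod K)) = (c + t) mod K"
    unfolding cycle_def by (simp_all add: mod_add_right_eq)
  from \<open>t mod K < K\<close> assms have "follows (y (t mod K)) (y (Suc (t mod K) mod K))"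
    unfolding cycle_def by blast
  then show "follows (y (t mod K)) (y (Suc t mod K))" by (simp only: mod_Suc_eq)
qed

lemma cycle_start_notin_cycle:
  assumes "cycle c y1" "cycle c y2" "y1 0 \<noteq> y2 0"
  shows "y1 0 \<notin> y2 ` {..<K}"
proof
  assume "y1 0 \<in> y2 ` {..<K}"
  then obtain t where "t < K" "y1 0 = y2 t" by auto
  with assms(1,2) K_pos have "(c + t) mod K = (c + 0) mod K"
    unfolding cycle_def by (metis add_0_right)
  with \<open>t < K\<close> K_pos have "t = 0" by (blast dest: mod_add_left_cancel_less)
  with assms(3) \<open>y1 0 = y2 t\<close> show False by simp
qed

lemma cycle_rotation:
  assumes cyc: "cycle c y"
  shows "distinct (map (\<lambda>a. y ((b + a) mod K)) [0..<K])" (is "distinct ?w")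
    and "set (map (\<lambda>a. y ((b + a) mod K)) [0..<K]) = y ` {..<K}"
proof -
  show "distinct ?w"
    unfolding distinct_map
  proof
    show "inj_on (\<lambda>a. y ((b + a) mod K)) (set [0..<K])"
    proof (rule inj_onI)
      fix a a' assume "a \<in> set [0..<K]" "a' \<in> set [0..<K]" "y ((b + a) mod K) = y ((b + a') mod K)"
      then have "a < K" "a' < K" "(c + b + a) mod K = (c + b + a') mod K"
        using cycle_periodic (2) [OF cyc, of "b + a"] cycle_periodic (2) [OF cyc, of "b + a'"]
        by (auto simp only: add.assoc) auto
      then show "a = a'" by (rule mod_add_left_cancel_less)
    qed
  qed simp
  show "set ?w = y ` {..<K}"
  proof (rule card_seteq)
    show "set ?w \<subseteq> y ` {..<K}" using K_pos by auto
    have "card (set ?w) = K"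
      using distinct_card [OF \<open>distinct ?w\<close>] by (simp del: set_map)
    then show "card (y ` {..<K}) \<le> card (set ?w)"
      using card_image_le [of "{..<K}" y] by simp
  qed simp
qed

definition window :: "(nat \<Rightarrow> nat) \<Rightarrow> nat \<Rightarrow> nat \<Rightarrow> nat \<Rightarrow> nat set" where
  "window s a t0 t = {x. x < n \<and> t0 \<le> s x \<and> s x \<le> s a \<and> s x mod K = (t0 + t) mod K}"

lemma window_mod: "window s a t0 (t mod K) = window s a t0 t"
  unfolding window_def by (simp add: mod_add_right_eq)

lemma window_residue: "admissible s \<Longrightarrow> x \<in> window s a t0 t \<Longrightarrow> x < n \<and> cls x = (t0 + t) mod K"
  unfolding window_def using admissible_cls by auto

lemma window_pred:
  assumes sa: "admissible sa" and sb: "admissible sb"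
    and b: "b < n" "sa b = t0" "t0 < sb b"
    and y: "y \<in> window sa a t0 (Suc t)"
  shows "\<exists>x \<in> window sa a t0 t \<union> window sb b t0 t. follows x y"
proof (cases "t0 < sa y")
  case True
  from y have "y < n" "sa y \<le> sa a" "sa y mod K = Suc (t0 + t) mod K"
    by (simp_all add: window_def)
  have "sa y - 1 < n" using admissible_less [OF sa \<open>y < n\<close>] by linarith
  then obtain x where "x < n" "sa x = sa y - 1" by (rule admissible_at [OF sa])
  with True have "sa y = Suc (sa x)" by simp
  with \<open>sa y mod K = _\<close> have "sa x mod K = (t0 + t) mod K" by (auto simp: Suc_mod_eq_Suc_mod_iff)
  with \<open>x < n\<close> \<open>sa y = Suc (sa x)\<close> \<open>sa y \<le> sa a\<close> True
  have "x \<in> window sa a t0 t" by (simp add: window_def)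
  moreover have "follows x y" by (rule admissible_follows) fact+
  ultimately show ?thesis by blast
next
  case False
  with y b have "y = b"
    using admissible_inj [OF sa] by (auto simp: window_def)
  have "sb b - 1 < n" using admissible_less [OF sb b(1)] by linarith
  then obtain x where "x < n" "sb x = sb b - 1" by (rule admissible_at [OF sb])
  with b have "sb b = Suc (sb x)" by simp
  moreover have "sb b mod K = sa b mod K"
    using admissible_cls [OF sa b(1)] admissible_cls [OF sb b(1)] by simp
  ultimately have "sb x mod K = (t0 + t) mod K"
    using y \<open>y = b\<close> by (auto simp: window_def Suc_mod_eq_Suc_mod_iff)
  with \<open>x < n\<close> \<open>sb b = Suc (sb x)\<close> b have "x \<in> window sb b t0 t" by (simp add: window_def)
  moreover have "follows x b" by (rule admissible_follows) fact+
  ultimately show ?thesis using \<open>y = b\<close> by blast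
qed

lemma window_succ:
  assumes sa: "admissible sa" and sb: "admissible sb"
    and a: "a < n" "sb a = t0" "t0 < sa a" and b: "b < n" "t0 < sb b"
    and x: "x \<in> window sa a t0 t"
  shows "\<exists>y \<in> window sa a t0 (Suc t) \<union> window sb b t0 (Suc t). follows x y"
proof (cases "sa x < sa a")
  case True
  from x have "x < n" "t0 \<le> sa x" "sa x mod K = (t0 + t) mod K"
    by (simp_all add: window_def)
  have "Suc (sa x) < n" using True admissible_less [OF sa a(1)] by linarith
  then obtain y where "y < n" "sa y = Suc (sa x)" by (rule admissible_at [OF sa])
  with True \<open>t0 \<le> sa x\<close> \<open>sa x mod K = _\<close> have "y \<in> window sa a t0 (Suc t)"
    by (simp add: window_def Suc_mod_eq_Suc_mod_iff)
  moreover have "follows x y" by (rule admissible_follows) fact+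
  ultimately show ?thesis by blast
next
  case False
  with x a have "x = a"
    using admissible_inj [OF sa] by (auto simp: window_def)
  have "Suc t0 < n" using b admissible_less [OF sb b(1)] by linarith
  then obtain y where "y < n" "sb y = Suc (sb a)" using a(2) by (metis admissible_at [OF sb])
  moreover have "sb a mod K = sa a mod K"
    using admissible_cls [OF sa a(1)] admissible_cls [OF sb a(1)] by simp
  ultimately have "y \<in> window sb b t0 (Suc t)"
    using x \<open>x = a\<close> a b by (auto simp: window_def Suc_mod_eq_Suc_mod_iff)
  moreover have "follows a y" by (rule admissible_follows) fact+
  ultimately show ?thesis using \<open>x = a\<close> by blast
qed

text \<open>The key-maximal points of the layers form one cycle (by pred), the key-minimal
  points another (by succ).\<close>

lemma cycles_from_layers:
  fixes Y :: "nat \<Rightarrow> nat set"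
  assumes periodic: "\<And>t. Y (t mod K) = Y t"
    and finite: "\<And>t. finite (Y t)" and nonempty: "\<And>t. Y t \<noteq> {}"
    and residue: "\<And>t x. x \<in> Y t \<Longrightarrow> x < n \<and> cls x = (c + t) mod K"
    and pred: "\<And>t y. y \<in> Y (Suc t) \<Longrightarrow> \<exists>x\<in>Y t. follows x y"
    and succ: "\<And>t x. x \<in> Y t \<Longrightarrow> \<exists>y\<in>Y (Suc t). follows x y"
    and two: "i \<in> Y 0" "j \<in> Y 0" "i \<noteq> j"
  shows "\<exists>y1 y2. cycle c y1 \<and> cycle c y2 \<and> y1 0 \<noteq> y2 0"
proof -
  define hi where "hi t = arg_min_on (\<lambda>x. - key x) (Y t)" for t
  define lo where "lo t = arg_min_on key (Y t)" for t
  have hi: "hi t \<in> Y t" "x \<in> Y t \<Longrightarrow> key x \<le> key (hi t)" for t x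
    using arg_min_if_finite(1) [OF finite nonempty] arg_min_least [OF finite nonempty, where f = "\<lambda>x. - key x"]
    by (auto simp: hi_def)
  have lo: "lo t \<in> Y t" "x \<in> Y t \<Longrightarrow> key (lo t) \<le> key x" for t x
    using arg_min_if_finite(1) [OF finite nonempty] arg_min_least [OF finite nonempty]
    by (auto simp: lo_def)
  have "cycle c hi"
    unfolding cycle_def
  proof (intro allI impI conjI)
    fix t
    show "hi t < n" "cls (hi t) = (c + t) mod K" using residue [OF hi(1)] by auto
    obtain x where "x \<in> Y t" "follows x (hi (Suc t))" using pred hi(1) by blast
    then have "follows (hi t) (hi (Suc t))" using hi(2) by (blast intro: follows_mono)
    then show "follows (hi t) (hi (Suc t mod K))" by (simp add: hi_def periodic)
  qed
  moreover have "cycle c lo"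
    unfolding cycle_def
  proof (intro allI impI conjI)
    fix t
    show "lo t < n" "cls (lo t) = (c + t) mod K" using residue [OF lo(1)] by auto
    obtain y where "y \<in> Y (Suc t)" "follows (lo t) y" using succ lo(1) by blast
    then have "follows (lo t) (lo (Suc t))" using lo(2) by (blast intro: follows_mono)
    then show "follows (lo t) (lo (Suc t mod K))" by (simp add: lo_def periodic)
  qed
  moreover have "hi 0 \<noteq> lo 0"
  proof
    assume "hi 0 = lo 0"
    then have "key i = key j" using hi(2) lo(2) two(1,2) by (metis order_antisym)
    moreover have "i < n" "j < n" using residue two(1,2) by auto
    ultimately show False using inj_key two(3) by (auto dest: inj_onD)
  qed
  ultimately show ?thesis by blast
qed

lemma cycles_from_crossing:
  assumes s1: "admissible s1" and s2: "admissible s2"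
    and ij: "i < n" "j < n" "s1 j = t0" "s2 i = t0" "t0 < s1 i" "t0 < s2 j"
  shows "\<exists>y1 y2. cycle t0 y1 \<and> cycle t0 y2 \<and> y1 0 \<noteq> y2 0"
proof -
  define Y where "Y t = window s1 i t0 t \<union> window s2 j t0 t" for t
  have "s1 i mod K = t0 mod K"
    using admissible_cls [OF s1 ij(1)] admissible_cls [OF s2 ij(1)] ij(4) by simp
  then have "K dvd s1 i - t0" using ij(5) by (simp add: mod_eq_dvd_iff_nat)
  then have "t0 + K \<le> s1 i" using ij(5) by (auto dest: dvd_imp_le)
  have "Y t \<noteq> {}" for t
  proof -
    have "t mod K < K" using K_pos by simp
    then have "t0 + t mod K < n" using \<open>t0 + K \<le> s1 i\<close> admissible_less [OF s1 ij(1)] by linarith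
    then obtain x where "x < n" "s1 x = t0 + t mod K" by (rule admissible_at [OF s1])
    then have "x \<in> window s1 i t0 t"
      using \<open>t0 + K \<le> s1 i\<close> \<open>t mod K < K\<close> by (simp add: window_def mod_add_right_eq)
    then show ?thesis by (auto simp: Y_def)
  qed
  show ?thesis
  proof (rule cycles_from_layers [of Y])
    show "Y (t mod K) = Y t" for t by (simp add: Y_def window_mod)
    show "finite (Y t)" for t by (auto simp: Y_def window_def)
    show "Y t \<noteq> {}" for t by fact
    show "x < n \<and> cls x = (t0 + t) mod K" if "x \<in> Y t" for t x
      using that window_residue [OF s1] window_residue [OF s2] by (auto simp: Y_def)
    show "\<exists>x\<in>Y t. follows x y" if "y \<in> Y (Suc t)" for t y
    proof -
      from that consider "y \<in> window s1 i t0 (Suc t)" | "y \<in> window s2 j t0 (Suc t)"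
        unfolding Y_def by blast
      then show ?thesis
        using window_pred [OF s1 s2 ij(2,3,6)] window_pred [OF s2 s1 ij(1,4,5)]
        unfolding Y_def by cases (simp_all add: Un_commute)
    qed
    show "\<exists>y\<in>Y (Suc t). follows x y" if "x \<in> Y t" for t x
    proof -
      from that consider "x \<in> window s1 i t0 t" | "x \<in> window s2 j t0 t"
        unfolding Y_def by blast
      then show ?thesis
        using window_succ [OF s1 s2 ij(1,4,5) ij(2,6)] window_succ [OF s2 s1 ij(2,3,6) ij(1,5)]
        unfolding Y_def by cases (simp_all add: Un_commute)
    qed
    show "i \<in> Y 0" "j \<in> Y 0" "i \<noteq> j"
      using ij \<open>s1 i mod K = t0 mod K\<close> by (auto simp: Y_def window_def)
  qed
qed

lemma crossing_at_first_disagreement: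
  assumes sa: "admissible sa" and sb: "admissible sb"
    and j: "j < n" "sa j \<noteq> sb j" "sa j = t0"
    and first: "\<forall>x<n. sa x \<noteq> sb x \<longrightarrow> t0 \<le> sa x \<and> t0 \<le> sb x"
  obtains i where "i < n" "sb i = t0" "t0 < sa i" "t0 < sb j"
proof -
  have "t0 < n" using admissible_less [OF sa j(1)] j(3) by simp
  then obtain i where i: "i < n" "sb i = t0" by (rule admissible_at [OF sb])
  have "sa i \<noteq> sb i"
    using admissible_inj [OF sa i(1) j(1)] i j by auto
  with first i j show ?thesis using that by force
qed

lemma cycles_from_different:
  assumes s1: "admissible s1" and s2: "admissible s2" and diff: "\<exists>x<n. s1 x \<noteq> s2 x"
  shows "\<exists>c y1 y2. cycle c y1 \<and> cycle c y2 \<and> y1 0 \<noteq> y2 0"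
proof -
  define D where "D = {x. x < n \<and> s1 x \<noteq> s2 x}"
  define t0 where "t0 = Min (s1 ` D \<union> s2 ` D)"
  have fin: "finite (s1 ` D \<union> s2 ` D)" by (simp add: D_def)
  have first: "\<forall>x<n. s1 x \<noteq> s2 x \<longrightarrow> t0 \<le> s1 x \<and> t0 \<le> s2 x"
    using fin by (auto simp: t0_def D_def)
  have "t0 \<in> s1 ` D \<union> s2 ` D" using fin diff unfolding t0_def by (intro Min_in) (auto simp: D_def)
  then obtain j where j: "j < n" "s1 j \<noteq> s2 j" and "s1 j = t0 \<or> s2 j = t0"
    by (auto simp: D_def)
  then consider "s1 j = t0" | "s2 j = t0" by blast
  then show ?thesis
  proof cases
    case 1
    obtain i where "i < n" "s2 i = t0" "t0 < s1 i" "t0 < s2 j"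
      using crossing_at_first_disagreement [OF s1 s2 j 1 first] .
    with cycles_from_crossing [OF s1 s2] j 1 show ?thesis by blast
  next
    case 2
    from first have "\<forall>x<n. s2 x \<noteq> s1 x \<longrightarrow> t0 \<le> s2 x \<and> t0 \<le> s1 x" by auto
    then obtain i where "i < n" "s1 i = t0" "t0 < s2 i" "t0 < s1 j"
      using crossing_at_first_disagreement [OF s2 s1 j(1) j(2) [symmetric] 2] by blast
    with cycles_from_crossing [OF s1 s2] j 2 show ?thesis by blast
  qed
qed

end

text \<open>Up to the factor 1/g and an additive constant, weight l i is the exponent of u in
  u_l(x_i)^-1 at the specialization; so u_l(x_b) = u_l(x_a) t q^s forces
  weight b = weight a + (r - 1) - (k + 1) s.\<close>

definition weight :: "nat \<Rightarrow> nat \<Rightarrow> int list \<Rightarrow> nat \<Rightarrow> int" where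
  "weight k r l x = int (r - 1) * int (rank l x) + int (k + 1) * l ! x"

text \<open>The lexicographic order on pairs (weight x, -x), packed into one integer.\<close>

definition weight_key :: "nat \<Rightarrow> nat \<Rightarrow> int list \<Rightarrow> nat \<Rightarrow> int" where
  "weight_key k r l x = int (length l + 1) * weight k r l x - int x"

lemma inj_weight_key: "inj_on (weight_key k r l) {..<length l}"
proof (rule inj_onI)
  fix x y assume "x \<in> {..<length l}" "y \<in> {..<length l}"
  then have bounds: "int x < int (length l + 1)" "int y < int (length l + 1)" by auto
  assume "weight_key k r l x = weight_key k r l y"
  then have "\<not> weight_key k r l y < weight_key k r l x" "\<not> weight_key k r l x < weight_key k r l y"
    by simp_all
  then show "x = y"
    unfolding weight_key_def lex_encode_less_iff [OF bounds] lex_encode_less_iff [OF bounds(2,1)]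
    by linarith
qed

lemma weight_key_step_iff:
  assumes "x < length l" "y < length l"
  shows "weight_key k r l y < weight_key k r l x + int (length l + 1) * int (r - 1) \<longleftrightarrow>
    weight k r l y < weight k r l x + int (r - 1) \<or> (weight k r l y = weight k r l x + int (r - 1) \<and> x < y)"
  using assms lex_encode_less_iff [of x "int (length l + 1)" y "weight k r l y" "weight k r l x + int (r - 1)"]
  unfolding weight_key_def by (simp add: algebra_simps)

lemma rho_exponent:
  assumes "i < length l"
  shows "real (r - 1) * rho l ! i - real (k + 1) * of_int (l ! i)
    = real (r - 1) * ((real (length l) - 1) / 2) - of_int (weight k r l i)"
  unfolding rho_nth [OF assms] weight_def by (simp add: right_diff_distrib)

lemma spec_mono_rho_eq_iff:
  assumes "2 \<le> r" "length m = length l" "i < length l"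
  shows "(\<forall>u>0. spec_mono k r u (rho m ! i) (m ! i) = spec_mono k r u (rho l ! i) (l ! i)) \<longleftrightarrow>
    weight k r m i = weight k r l i \<and> int (r - 1) dvd (m ! i - l ! i)"
proof -
  have "i < length m" using assms by simp
  show ?thesis
    unfolding spec_mono_eq_iff [OF assms(1)] rho_exponent [OF assms(3)] rho_exponent [OF \<open>i < length m\<close>] assms(2)
    by simp
qed

lemma rank_mod_eq_of_weight_eq:
  assumes "2 \<le> r" and weight: "weight k r m x = weight k r l x"
    and "int (r - 1) dvd (m ! x - l ! x)"
  shows "rank m x mod (k + 1) = rank l x mod (k + 1)"
proof -
  obtain e where e: "m ! x - l ! x = int (r - 1) * e" using assms(3) by (elim dvdE)
  have "int (r - 1) * (int (rank l x) - int (rank m x)) = int (k + 1) * (m ! x - l ! x)"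
    using weight by (simp add: weight_def algebra_simps)
  also have "\<dots> = int (r - 1) * (int (k + 1) * e)" by (simp add: e)
  finally have "int (rank l x) - int (rank m x) = int (k + 1) * e" using assms(1) by simp
  then have "int (rank l x) mod int (k + 1) = int (rank m x) mod int (k + 1)"
    by (simp add: mod_eq_dvd_iff)
  then show ?thesis by (simp only: zmod_int [symmetric] of_nat_eq_iff)
qed

lemma eq_of_weight_eq_rank_eq:
  assumes "length m = length l"
    and "\<And>x. x < length l \<Longrightarrow> weight k r m x = weight k r l x \<and> rank m x = rank l x"
  shows "m = l"
proof (rule nth_equalityI)
  fix x assume "x < length m"
  with assms have "weight k r m x = weight k r l x" "rank m x = rank l x" by simp_all
  then show "m ! x = l ! x" by (simp add: weight_def)
qed (rule assms(1))

lemma ulam_step_iff: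
  assumes "2 \<le> r" "a < length l" "b < length l"
  shows "(\<forall>u>0. ulam k r l b u = ulam k r l a u * spec_mono k r u 1 s) \<longleftrightarrow>
    int (k + 1) * s = weight k r l a + int (r - 1) - weight k r l b \<and> int (r - 1) dvd (s - l ! a + l ! b)"
proof -
  let ?ea = "real (r - 1) * (- (rho l ! a) + 1) - real (k + 1) * of_int (- (l ! a) + s)"
  let ?eb = "real (r - 1) * - (rho l ! b) - real (k + 1) * of_int (- (l ! b))"
  have "?ea - ?eb = of_int (weight k r l a + int (r - 1) - weight k r l b - int (k + 1) * s)"
    using assms(2,3) by (simp add: rho_nth weight_def algebra_simps)
  then have exponents: "?ea = ?eb \<longleftrightarrow> int (k + 1) * s = weight k r l a + int (r - 1) - weight k r l b"
    by (smt (verit) of_int_eq_0_iff)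
  have "(\<forall>u>0. ulam k r l b u = ulam k r l a u * spec_mono k r u 1 s) \<longleftrightarrow>
    (\<forall>u>0. spec_mono k r u (- (rho l ! a) + 1) (- (l ! a) + s) = spec_mono k r u (- (rho l ! b)) (- (l ! b)))"
    by (auto simp: ulam_def spec_mono_mult)
  also have "\<dots> \<longleftrightarrow> ?ea = ?eb \<and> int (r - 1) dvd (s - l ! a + l ! b)"
    by (simp add: spec_mono_eq_iff [OF assms(1)] algebra_simps)
  finally show ?thesis unfolding exponents .
qed

lemma two_le_sharp:
  assumes "is_wheel k r lam w1" "is_wheel k r lam w2" "set w1 \<noteq> set w2"
  shows "2 \<le> sharp k r lam"
proof -
  let ?W = "wheels k r lam" and ?R = "wheel_rot k r lam"
  have "?W \<subseteq> {w. set w \<subseteq> {..<length lam} \<and> length w = k + 1}"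
    unfolding wheels_def is_wheel_def by auto
  then have "finite ?W" by (rule finite_subset) (rule finite_lists_length_eq, simp)
  moreover have "?R \<subseteq> ?W \<times> ?W" by (auto simp: wheel_rot_def)
  ultimately have fin: "finite (?W // ?R)" by (rule finite_quotient)
  have w12: "w1 \<in> ?W" "w2 \<in> ?W" using assms(1,2) by (simp_all add: wheels_def)
  have "?R `` {w1} \<noteq> ?R `` {w2}"
  proof
    assume "?R `` {w1} = ?R `` {w2}"
    moreover have "(w2, w2) \<in> ?R" using w12 unfolding wheel_rot_def by (auto intro: exI [of _ 0])
    ultimately have "(w1, w2) \<in> ?R" by blast
    then obtain j where "w2 = rotate j w1" by (auto simp: wheel_rot_def)
    with assms(3) show False by simp
  qed
  then have "card {?R `` {w1}, ?R `` {w2}} = 2" by simp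
  moreover have "{?R `` {w1}, ?R `` {w2}} \<subseteq> ?W // ?R" using w12 by (auto intro: quotientI)
  ultimately show ?thesis unfolding sharp_def by (metis card_mono [OF fin])
qed

locale wheel_weights =
  fixes k r :: nat and lam :: "int list"
  assumes two_le_r: "2 \<le> r"
begin

sublocale residue_enumerations "length lam" "k + 1" "weight_key k r lam" "\<lambda>x. rank lam x mod (k + 1)"
  "int (length lam + 1) * int (r - 1)"
  by unfold_locales (simp_all add: inj_weight_key)

lemma follows_iff:
  "x < length lam \<Longrightarrow> y < length lam \<Longrightarrow> follows x y \<longleftrightarrow>
    weight k r lam y < weight k r lam x + int (r - 1) \<or>
    (weight k r lam y = weight k r lam x + int (r - 1) \<and> x < y)"
  unfolding follows_def by (rule weight_key_step_iff)

lemma admissible_rank: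
  assumes m: "length m = length lam"
    and weight: "\<And>x. x < length lam \<Longrightarrow> weight k r m x = weight k r lam x"
    and residue: "\<And>x. x < length lam \<Longrightarrow> rank m x mod (k + 1) = rank lam x mod (k + 1)"
  shows "admissible (rank m)"
  unfolding admissible_def
proof (intro conjI allI impI)
  show "bij_betw (rank m) {..<length lam} {..<length lam}" using bij_betw_rank [of m] m by simp
  show "rank m x mod (k + 1) = rank lam x mod (k + 1)" if "x < length lam" for x
    using residue that .
  fix x y assume xy: "x < length lam" "y < length lam" "rank m y = Suc (rank m x)"
  then have "m ! y < m ! x \<or> (m ! x = m ! y \<and> x < y)"
    using rank_less_iff [of x m y] m by (simp add: precedes_def)
  then have "int (k + 1) * (m ! y - m ! x) < 0 \<or> (m ! x = m ! y \<and> x < y)"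
    by (auto simp: mult_less_0_iff)
  moreover have "weight k r lam y - weight k r lam x = int (r - 1) + int (k + 1) * (m ! y - m ! x)"
    using weight [OF xy(1)] weight [OF xy(2)] xy(3) by (simp add: weight_def algebra_simps)
  ultimately show "follows x y"
    unfolding follows_iff [OF xy(1,2)] by auto
qed

lemma wheel_step:
  assumes ab: "a < length lam" "b < length lam"
    and residue: "rank lam b mod (k + 1) = Suc (rank lam a) mod (k + 1)"
    and "follows a b"
  obtains s :: nat
  where "int (k + 1) * int s = weight k r lam a + int (r - 1) - weight k r lam b"
    and "s = 0 \<Longrightarrow> a < b"
    and "\<forall>u>0. ulam k r lam b u = ulam k r lam a u * spec_mono k r u 1 (int s)"
proof -
  have "int (Suc (rank lam a)) mod int (k + 1) = int (rank lam b) mod int (k + 1)"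
    by (simp only: zmod_int [symmetric] residue)
  then have "int (k + 1) dvd int (Suc (rank lam a)) - int (rank lam b)"
    by (simp add: mod_eq_dvd_iff)
  then obtain d where d: "int (Suc (rank lam a)) - int (rank lam b) = int (k + 1) * d"
    by (elim dvdE)
  define S where "S = int (r - 1) * d + lam ! a - lam ! b"
  have "int (k + 1) * S = int (r - 1) * (int (k + 1) * d) + int (k + 1) * (lam ! a - lam ! b)"
    by (simp add: S_def algebra_simps)
  also have "\<dots> = weight k r lam a + int (r - 1) - weight k r lam b"
    unfolding d [symmetric] weight_def by (simp add: algebra_simps)
  finally have KS: "int (k + 1) * S = weight k r lam a + int (r - 1) - weight k r lam b" .
  have order: "weight k r lam b < weight k r lam a + int (r - 1) \<or>
      (weight k r lam b = weight k r lam a + int (r - 1) \<and> a < b)"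
    using \<open>follows a b\<close> follows_iff [OF ab] by simp
  with KS have "0 \<le> int (k + 1) * S" by auto
  then have "0 \<le> S" by (simp add: zero_le_mult_iff)
  show ?thesis
  proof
    show "int (k + 1) * int (nat S) = weight k r lam a + int (r - 1) - weight k r lam b"
      using KS \<open>0 \<le> S\<close> by simp
    show "a < b" if "nat S = 0" using that KS order \<open>0 \<le> S\<close> by auto
    have "int (r - 1) dvd (S - lam ! a + lam ! b)" by (simp add: S_def)
    then show "\<forall>u>0. ulam k r lam b u = ulam k r lam a u * spec_mono k r u 1 (int (nat S))"
      using ulam_step_iff [OF two_le_r ab] KS \<open>0 \<le> S\<close> by simp
  qed
qed

lemma cycle_steps:
  assumes cyc: "cycle c y"
  obtains s :: "nat \<Rightarrow> nat"
  where "\<And>t. s t = 0 \<Longrightarrow> y (t mod (k + 1)) < y (Suc t mod (k + 1))"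
    and "\<And>t. \<forall>u>0. ulam k r lam (y (Suc t mod (k + 1))) u
                  = ulam k r lam (y (t mod (k + 1))) u * spec_mono k r u 1 (int (s t))"
    and "\<And>b. (\<Sum>a<k + 1. s (b + a)) = r - 1"
proof -
  define Y where "Y t = y (t mod (k + 1))" for t
  have Y: "Y t < length lam" "rank lam (Y t) mod (k + 1) = (c + t) mod (k + 1)" "follows (Y t) (Y (Suc t))" for t
    using cycle_periodic [OF cyc] unfolding Y_def by blast+
  have "rank lam (Y (Suc t)) mod (k + 1) = Suc (rank lam (Y t)) mod (k + 1)" for t
    using Y(2) [of t] Y(2) [of "Suc t"] by (metis add_Suc_right mod_Suc_eq)
  then have "\<forall>t. \<exists>s. int (k + 1) * int s = weight k r lam (Y t) + int (r - 1) - weight k r lam (Y (Suc t)) \<and>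
      (s = 0 \<longrightarrow> Y t < Y (Suc t)) \<and>
      (\<forall>u>0. ulam k r lam (Y (Suc t)) u = ulam k r lam (Y t) u * spec_mono k r u 1 (int s))"
    by (metis wheel_step [OF Y(1) Y(1) _ Y(3)])
  then obtain s where s: "\<And>t. int (k + 1) * int (s t) = weight k r lam (Y t) + int (r - 1) - weight k r lam (Y (Suc t))"
    "\<And>t. s t = 0 \<Longrightarrow> Y t < Y (Suc t)"
    "\<And>t. \<forall>u>0. ulam k r lam (Y (Suc t)) u = ulam k r lam (Y t) u * spec_mono k r u 1 (int (s t))"
    by metis
  have periodic: "weight k r lam (Y (t + (k + 1))) = weight k r lam (Y t)" for t
    by (simp only: Y_def mod_add_self2)
  have "(\<Sum>a<k + 1. int (s (b + a))) = int (r - 1)" for b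
    using sum_periodic_telescope [where f = "\<lambda>t. weight k r lam (Y t)" and s = "\<lambda>t. int (s t)",
        OF _ periodic s(1)] by simp
  then have "(\<Sum>a<k + 1. s (b + a)) = r - 1" for b
    by (metis of_nat_eq_iff of_nat_sum)
  with s(2,3) show ?thesis using that unfolding Y_def by blast
qed

text \<open>The steps of a cycle sum to r - 1 > 0; cutting the cycle open after a positive
  step leaves a wheel.\<close>

lemma wheel_of_cycle:
  assumes cyc: "cycle c y"
  obtains w where "is_wheel k r lam w" "set w = y ` {..<k + 1}"
proof -
  obtain s where s: "\<And>t. s t = 0 \<Longrightarrow> y (t mod (k + 1)) < y (Suc t mod (k + 1))"
    "\<And>t. \<forall>u>0. ulam k r lam (y (Suc t mod (k + 1))) u
                  = ulam k r lam (y (t mod (k + 1))) u * spec_mono k r u 1 (int (s t))"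
    "\<And>b. (\<Sum>a<k + 1. s (b + a)) = r - 1"
    using cycle_steps [OF cyc] by blast
  have "\<exists>t1<k + 1. 1 \<le> s t1"
  proof (rule ccontr)
    assume "\<not> (\<exists>t1<k + 1. 1 \<le> s t1)"
    then have "(\<Sum>a<k + 1. s (0 + a)) = 0" by (intro sum.neutral) auto
    with s(3) [of 0] two_le_r show False by simp
  qed
  then obtain t1 where "t1 < k + 1" "1 \<le> s t1" by blast
  define w where "w = map (\<lambda>a. y ((Suc t1 + a) mod (k + 1))) [0..<k + 1]"
  define sl where "sl = map (\<lambda>a. s (Suc t1 + a)) [0..<k]"
  have set_w: "set w = y ` {..<k + 1}" unfolding w_def by (rule cycle_rotation (2) [OF cyc])
  have "sum_list sl = (\<Sum>a<k. s (Suc t1 + a))"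
    by (simp add: sl_def sum_list_sum_nth atLeast0LessThan)
  also have "\<dots> = r - 1 - s t1"
    using s(3) [of t1] by (simp add: sum.lessThan_Suc_shift del: sum.lessThan_Suc)
  finally have "sum_list sl \<le> r - 2" using \<open>1 \<le> s t1\<close> by linarith
  have "is_wheel k r lam w"
    unfolding is_wheel_def
  proof (intro conjI exI [of _ sl])
    show "length w = k + 1" "length sl = k" by (simp_all add: w_def sl_def)
    show "distinct w" unfolding w_def by (rule cycle_rotation (1) [OF cyc])
    show "\<forall>i\<in>set w. i < length lam" using cyc unfolding set_w cycle_def by auto
    show "sum_list sl \<le> r - 2" by fact
    show "\<forall>a<k. (\<forall>u>0. ulam k r lam (w ! (a + 1)) u = ulam k r lam (w ! a) u * spec_mono k r u 1 (int (sl ! a)))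
      \<and> (sl ! a = 0 \<longrightarrow> w ! a < w ! (a + 1))"
    proof (rule allI, rule impI)
      fix a assume "a < k"
      then have "w ! a = y ((Suc t1 + a) mod (k + 1))" "w ! (a + 1) = y (Suc (Suc t1 + a) mod (k + 1))"
        "sl ! a = s (Suc t1 + a)"
        by (simp_all add: w_def sl_def nth_append del: upt_Suc)
      with s(1,2) show "(\<forall>u>0. ulam k r lam (w ! (a + 1)) u = ulam k r lam (w ! a) u * spec_mono k r u 1 (int (sl ! a)))
        \<and> (sl ! a = 0 \<longrightarrow> w ! a < w ! (a + 1))" by simp
    qed
  qed
  with set_w show ?thesis using that by blast
qed

lemma two_le_sharp_of_cycles:
  assumes "cycle c y1" "cycle c y2" "y1 0 \<noteq> y2 0"
  shows "2 \<le> sharp k r lam"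
proof -
  obtain w1 where w1: "is_wheel k r lam w1" "set w1 = y1 ` {..<k + 1}"
    using wheel_of_cycle [OF assms(1)] .
  obtain w2 where w2: "is_wheel k r lam w2" "set w2 = y2 ` {..<k + 1}"
    using wheel_of_cycle [OF assms(2)] .
  have "y1 0 \<in> set w1" "y1 0 \<notin> set w2"
    using w1(2) w2(2) cycle_start_notin_cycle [OF assms] by auto
  then show ?thesis using two_le_sharp [OF w1(1) w2(1)] by blast
qed

end

theorem lemma4p7:
  fixes n k r :: nat and lam :: "int list"
  assumes "length lam = n" and "1 \<le> k" and "k \<le> n - 1" and "2 \<le> r"
    and "sharp k r lam \<le> 1"
  shows "\<not> (\<exists>mu :: int list. length mu = n \<and> mu \<noteq> lam \<and>
           (\<forall>i<n. \<forall>u::real. u > 0 \<longrightarrow>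
              spec_mono k r u (rho mu ! i) (mu ! i) = spec_mono k r u (rho lam ! i) (lam ! i)))"
proof
  assume "\<exists>mu :: int list. length mu = n \<and> mu \<noteq> lam \<and>
           (\<forall>i<n. \<forall>u::real. u > 0 \<longrightarrow>
              spec_mono k r u (rho mu ! i) (mu ! i) = spec_mono k r u (rho lam ! i) (lam ! i))"
  then obtain mu where mu: "length mu = length lam" "mu \<noteq> lam"
    and spec: "\<And>i. i < length lam \<Longrightarrow>
      \<forall>u>0. spec_mono k r u (rho mu ! i) (mu ! i) = spec_mono k r u (rho lam ! i) (lam ! i)"
    using assms(1) by auto
  interpret wheel_weights k r lam by unfold_locales (rule assms(4))
  have weight: "weight k r mu x = weight k r lam x" and dvd: "int (r - 1) dvd (mu ! x - lam ! x)"
    if "x < length lam" for x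
    using spec [OF that] spec_mono_rho_eq_iff [OF assms(4) mu(1) that] by simp_all
  have "admissible (rank lam)" by (rule admissible_rank) simp_all
  moreover have "admissible (rank mu)"
    using mu(1) weight rank_mod_eq_of_weight_eq [OF assms(4) weight dvd] by (rule admissible_rank)
  moreover have "\<exists>x<length lam. rank lam x \<noteq> rank mu x"
    using eq_of_weight_eq_rank_eq [OF mu(1)] weight mu(2) by metis
  ultimately obtain c y1 y2 where "cycle c y1" "cycle c y2" "y1 0 \<noteq> y2 0"
    using cycles_from_different by blast
  then have "2 \<le> sharp k r lam" by (rule two_le_sharp_of_cycles)
  with assms(5) show False by simp
qed

end
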